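(* Let $E$ and $F$ be Banach lattices such that $E$ is positively isomorphic to a subspace of $F$, i.e. there is a positive linear operator $T\colon E\to F$ that is a topological isomorphism onto its range. If $F$ has the positive Schur property, then $E$ has the positive Schur property.
   Context: A Banach lattice $E$ has the positive Schur property (PSP) if every weakly null sequence of positive elements of $E$ (i.e. elements of $E^+=\{x\in E: x\ge 0\}$) is norm null. A linear operator between Banach lattices is positive if it maps positive elements to positive elements. *)

theory Defs
  imports "HOL-Analysis.Analysis"
begin

definition lmod :: "'a::{lattice, uminus} \<Rightarrow> 'a" where
  "lmod x = sup x (- x)"

definition banach_lattice :: "'a::{banach, ordered_real_vector, lattice} itself \<Rightarrow> bool" where
  "banach_lattice TYPE('a) \<longleftrightarrow> (\<forall>x y :: 'a. lmod x \<le> lmod y \<longrightarrow> norm x \<le> norm y)"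

definition weakly_null :: "(nat \<Rightarrow> 'a::real_normed_vector) \<Rightarrow> bool" where
  "weakly_null x \<longleftrightarrow> (\<forall>f :: 'a \<Rightarrow> real. bounded_linear f \<longrightarrow> (\<lambda>n. f (x n)) \<longlonglongrightarrow> 0)"

definition positive_schur :: "'a::{banach, ordered_real_vector, lattice} itself \<Rightarrow> bool" where
  "positive_schur TYPE('a) \<longleftrightarrow>
     (\<forall>x :: nat \<Rightarrow> 'a. (\<forall>n. 0 \<le> x n) \<and> weakly_null x \<longrightarrow> (\<lambda>n. norm (x n)) \<longlonglongrightarrow> 0)"

definition positive_op :: "('a::ordered_ab_group_add \<Rightarrow> 'b::ordered_ab_group_add) \<Rightarrow> bool" where
  "positive_op T \<longleftrightarrow> (\<forall>x. 0 \<le> x \<longrightarrow> 0 \<le> T x)"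

end

theory Submission
  imports Defs
begin

lemma positive_schurD:
  assumes "positive_schur TYPE('a::{banach, ordered_real_vector, lattice})"
    and "\<And>n. 0 \<le> x n" and "weakly_null x"
  shows "(\<lambda>n. norm (x n :: 'a)) \<longlonglongrightarrow> 0"
  using assms unfolding positive_schur_def by blast

lemma weakly_null_bounded_linear_image:
  assumes "bounded_linear T" and "weakly_null x"
  shows "weakly_null (\<lambda>n. T (x n))"
  unfolding weakly_null_def
proof (intro allI impI)
  fix f :: "'b \<Rightarrow> real"
  assume "bounded_linear f"
  then have "bounded_linear (\<lambda>y. f (T y))"
    using bounded_linear_compose[OF _ assms(1)] by blast
  then show "(\<lambda>n. f (T (x n))) \<longlonglongrightarrow> 0"
    using assms(2) unfolding weakly_null_def by blast
qed

lemma tendsto_zero_if_bounded_below_image: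
  fixes T :: "'a::real_normed_vector \<Rightarrow> 'b::real_normed_vector"
  assumes "c > 0" and "\<And>y. c * norm y \<le> norm (T y)"
    and "(\<lambda>n. T (x n)) \<longlonglongrightarrow> 0"
  shows "x \<longlonglongrightarrow> 0"
proof (rule Lim_null_comparison)
  show "\<forall>\<^sub>F n in sequentially. norm (x n) \<le> norm (T (x n)) / c"
    using assms(1,2) by (simp add: pos_le_divide_eq mult.commute)
  show "(\<lambda>n. norm (T (x n)) / c) \<longlonglongrightarrow> 0"
    using assms(3) by (intro tendsto_divide_zero) (simp add: tendsto_norm_zero_iff)
qed

theorem lemma1p2:
  fixes T :: "'a::{banach, ordered_real_vector, lattice} \<Rightarrow> 'b::{banach, ordered_real_vector, lattice}"
  assumes "banach_lattice TYPE('a)" and "banach_lattice TYPE('b)"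
    and "linear T" and "positive_op T"
    and "bounded_linear T" and "\<exists>c>0. \<forall>x. c * norm x \<le> norm (T x)"
    and "positive_schur TYPE('b)"
  shows "positive_schur TYPE('a)"
  unfolding positive_schur_def
proof (intro allI impI)
  fix x :: "nat \<Rightarrow> 'a"
  assume x: "(\<forall>n. 0 \<le> x n) \<and> weakly_null x"
  obtain c where c: "c > 0" "\<And>y. c * norm y \<le> norm (T y)"
    using assms(6) by blast
  have "(\<lambda>n. norm (T (x n))) \<longlonglongrightarrow> 0"
  proof (rule positive_schurD[OF assms(7)])
    show "0 \<le> T (x n)" for n
      using x assms(4) unfolding positive_op_def by blast
    show "weakly_null (\<lambda>n. T (x n))"
      using x weakly_null_bounded_linear_image[OF assms(5)] by blast
  qed
  then have "x \<longlonglongrightarrow> 0"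
    by (intro tendsto_zero_if_bounded_below_image[OF c]) (simp only: tendsto_norm_zero_iff)
  then show "(\<lambda>n. norm (x n)) \<longlonglongrightarrow> 0"
    by (simp only: tendsto_norm_zero_iff)
qed

end
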